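(* Let $n_0,n_1\ge 1$ and $r\ge 2$ be integers such that $\left(\frac{1}{n_0}\right)^{\frac{1}{r-1}}+\left(\frac{1}{n_1}\right)^{\frac{1}{r-1}}\ge 1$. Let $$p=\frac{\left(\frac{1}{n_0}\right)^{\frac{1}{r-1}}}{\left(\frac{1}{n_0}\right)^{\frac{1}{r-1}}+\left(\frac{1}{n_1}\right)^{\frac{1}{r-1}}}.$$ Then $n_0p^r+n_1(1-p)^r\le 1$. *)

theory Defs
  imports Complex_Main
begin

end

theory Submission
  imports Defs
begin

text \<open>Put \<open>a = (1/n0) powr (1/(r-1))\<close>, \<open>b = (1/n1) powr (1/(r-1))\<close> and \<open>S = a + b\<close>.
  Since \<open>n0 * a^(r-1) = n1 * b^(r-1) = 1\<close>, we get \<open>n0 * p^r = a / S^r\<close> and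
  \<open>n1 * (1 - p)^r = b / S^r\<close>, so the sum is \<open>1 / S^(r-1)\<close>, which is at most 1 because \<open>S \<ge> 1\<close>.\<close>

lemma mult_inverse_powr_power_eq_1:
  fixes x :: real and k :: nat
  assumes "x > 0" "k \<ge> 1"
  shows "x * ((1 / x) powr (1 / real k)) ^ k = 1"
proof -
  have "((1 / x) powr (1 / real k)) ^ k = (1 / x) powr (1 / real k * real k)"
    using assms(1) by (simp add: powr_realpow [symmetric] powr_powr)
  also have "\<dots> = 1 / x"
    using assms by simp
  finally show ?thesis
    using assms(1) by simp
qed

lemma power_weighted_sum_eq:
  fixes a b x y :: real and k :: nat
  assumes "x * a ^ k = 1" "y * b ^ k = 1" "a + b \<noteq> 0"
  shows "x * (a / (a + b)) ^ Suc k + y * (b / (a + b)) ^ Suc k = 1 / (a + b) ^ k"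
proof -
  have "x * (a / (a + b)) ^ Suc k = a / (a + b) ^ Suc k"
    using assms(1) by (simp add: power_divide mult.assoc [symmetric])
  moreover have "y * (b / (a + b)) ^ Suc k = b / (a + b) ^ Suc k"
    using assms(2) by (simp add: power_divide mult.assoc [symmetric])
  ultimately show ?thesis
    using assms(3) by (simp add: add_divide_distrib [symmetric])
qed

theorem lemma2p2:
  fixes n0 n1 r :: nat and p :: real
  assumes "n0 \<ge> 1" and "n1 \<ge> 1" and "r \<ge> 2"
    and "(1 / real n0) powr (1 / (real r - 1)) + (1 / real n1) powr (1 / (real r - 1)) \<ge> 1"
    and "p = (1 / real n0) powr (1 / (real r - 1)) /
             ((1 / real n0) powr (1 / (real r - 1)) + (1 / real n1) powr (1 / (real r - 1)))"
  shows "real n0 * p ^ r + real n1 * (1 - p) ^ r \<le> 1"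
proof -
  define k where "k = r - 1"
  have "k \<ge> 1" "r = Suc k" "real r - 1 = real k"
    using assms(3) by (auto simp: k_def of_nat_diff)
  define a where "a = (1 / real n0) powr (1 / real k)"
  define b where "b = (1 / real n1) powr (1 / real k)"
  have "real n0 * a ^ k = 1" "real n1 * b ^ k = 1"
    unfolding a_def b_def using assms(1,2) \<open>k \<ge> 1\<close>
    by (simp_all add: mult_inverse_powr_power_eq_1)
  moreover have "a + b \<ge> 1" "p = a / (a + b)"
    using assms(4,5) \<open>real r - 1 = real k\<close> by (simp_all add: a_def b_def)
  moreover from this have "1 - p = b / (a + b)"
    by (simp add: field_simps)
  ultimately have "real n0 * p ^ r + real n1 * (1 - p) ^ r = 1 / (a + b) ^ k"
    using \<open>r = Suc k\<close> power_weighted_sum_eq by simp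
  also have "\<dots> \<le> 1"
    using \<open>a + b \<ge> 1\<close> by (simp add: one_le_power)
  finally show ?thesis .
qed

end
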